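(* Let $\mathsf{X},\mathsf{Y}$ be Polish spaces and $c:\mathsf{X}\times\mathsf{Y}\to[0,\infty)$ continuous. Given a nonempty $c$-cyclically monotone set $\Gamma\subseteq\mathsf{X}\times\mathsf{Y}$, define $$I(x,y):=\sup_{k\ge2}\ \sup_{(x_i,y_i)_{i=2}^k\subset\Gamma}\ \sup_{\sigma\in\Sigma(k)}\ \sum_{i=1}^k c(x_i,y_i)-\sum_{i=1}^k c(x_i,y_{\sigma(i)}),\qquad (x_1,y_1):=(x,y).$$ Then $I:\mathsf{X}\times\mathsf{Y}\to[0,\infty]$ is lower semicontinuous and $I=0$ on $\Gamma$. Moreover, $$I(x,y)\ge\sup_{k\ge2}\ \sup_{(x_i,y_i)_{i=2}^k\subset\Gamma}\ \sum_{i=1}^k c(x_i,y_i)-\sum_{i=1}^k c(x_i,y_{i+1})\quad(y_{k+1}:=y_1),$$ and equality holds as soon as $x\in\mathsf{X}_0:=\operatorname{proj}_{\mathsf{X}}\Gamma$ or $y\in\mathsf{Y}_0:=\operatorname{proj}_{\mathsf{Y}}\Gamma$.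
   Context: $\Sigma(k)$ denotes the set of permutations of $\{1,\dots,k\}$. A set $\Gamma\subset\mathsf{X}\times\mathsf{Y}$ is $c$-cyclically monotone if $\sum_{i=1}^k c(x_i,y_i)\le\sum_{i=1}^k c(x_i,y_{i+1})$ for all $k\ge1$ and $(x_i,y_i)\in\Gamma$, with $y_{k+1}:=y_1$. *)

theory Defs
  imports "HOL-Analysis.Analysis"
begin

definition c_cyclically_monotone :: "('a \<times> 'b \<Rightarrow> real) \<Rightarrow> ('a \<times> 'b) set \<Rightarrow> bool" where
  "c_cyclically_monotone c \<Gamma> \<longleftrightarrow>
     (\<forall>k::nat. \<forall>xs ys. k \<ge> 1 \<and> (\<forall>i\<in>{1..k}. (xs i, ys i) \<in> \<Gamma>) \<longrightarrow>
        (\<Sum>i=1..k. c (xs i, ys i)) \<le> (\<Sum>i=1..k. c (xs i, ys (if i = k then 1 else i + 1))))"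

definition lower_semicont :: "('a::topological_space \<Rightarrow> ereal) \<Rightarrow> bool" where
  "lower_semicont f \<longleftrightarrow> (\<forall>t. open {p. t < f p})"

definition I_fun :: "('a \<times> 'b \<Rightarrow> real) \<Rightarrow> ('a \<times> 'b) set \<Rightarrow> 'a \<times> 'b \<Rightarrow> ereal" where
  "I_fun c \<Gamma> p = (SUP (k, xs, ys, \<sigma>) \<in> {(k::nat, xs, ys, \<sigma>). k \<ge> 2 \<and> (xs 1, ys 1) = p \<and>
        (\<forall>i\<in>{2..k}. (xs i, ys i) \<in> \<Gamma>) \<and> \<sigma> permutes {1..k}}.
      ereal ((\<Sum>i=1..k. c (xs i, ys i)) - (\<Sum>i=1..k. c (xs i, ys (\<sigma> i)))))"

definition J_fun :: "('a \<times> 'b \<Rightarrow> real) \<Rightarrow> ('a \<times> 'b) set \<Rightarrow> 'a \<times> 'b \<Rightarrow> ereal" where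
  "J_fun c \<Gamma> p = (SUP (k, xs, ys) \<in> {(k::nat, xs, ys). k \<ge> 2 \<and> (xs 1, ys 1) = p \<and>
        (\<forall>i\<in>{2..k}. (xs i, ys i) \<in> \<Gamma>)}.
      ereal ((\<Sum>i=1..k. c (xs i, ys i)) - (\<Sum>i=1..k. c (xs i, ys (if i = k then 1 else i + 1)))))"

end

theory Submission
  imports Defs "HOL-Combinatorics.Orbits"
begin

text \<open>A permutation of a finite index set splits into cycles, and c-cyclical monotonicity says
  exactly that a cycle whose points all lie in \<Gamma> has nonpositive rearrangement gain
  \<Sum> c(x_u, y_u) - c(x_u, y_\<sigma>(u)). Hence I vanishes on \<Gamma>; at an
  arbitrary point (x_1, y_1) only the cycle through 1 can have positive gain, and listing
  that cycle in order produces a competitor for J, so I \<le> J. The cycle is trivial when it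
  has length one, which is why I \<le> J needs J \<ge> 0, i.e. a partner of x or y in \<Gamma>.
  Conversely the cyclic shift is one of the permutations in I, so J \<le> I, and I is lower
  semicontinuous as a supremum of functions continuous in (x_1, y_1).\<close>

abbreviation cyclic_succ :: "nat \<Rightarrow> nat \<Rightarrow> nat" where
  "cyclic_succ k i \<equiv> if i = k then 1 else i + 1"

definition rearrangement_gain ::
    "('a \<times> 'b \<Rightarrow> real) \<Rightarrow> ('i \<Rightarrow> 'a) \<Rightarrow> ('i \<Rightarrow> 'b) \<Rightarrow> ('i \<Rightarrow> 'i) \<Rightarrow> 'i set \<Rightarrow> real" where
  "rearrangement_gain c xs ys \<sigma> A = (\<Sum>u\<in>A. c (xs u, ys u) - c (xs u, ys (\<sigma> u)))"

lemma rearrangement_gain_id [simp]: "rearrangement_gain c xs ys id A = 0"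
  by (simp add: rearrangement_gain_def)

lemma rearrangement_gain_eq_diff:
  "rearrangement_gain c xs ys \<sigma> A = (\<Sum>u\<in>A. c (xs u, ys u)) - (\<Sum>u\<in>A. c (xs u, ys (\<sigma> u)))"
  by (simp add: rearrangement_gain_def sum_subtractf)

lemma rearrangement_gain_subset_diff:
  assumes "finite A" "B \<subseteq> A"
  shows "rearrangement_gain c xs ys \<sigma> A
    = rearrangement_gain c xs ys \<sigma> B + rearrangement_gain c xs ys \<sigma> (A - B)"
  unfolding rearrangement_gain_def using sum.subset_diff[OF assms(2,1)] by (simp add: add.commute)

lemma cyclic_shift_permutes:
  "(\<lambda>i. if i \<in> {1..k} then cyclic_succ k i else i) permutes {1..k}"
proof (rule bij_imp_permutes)
  let ?t = "\<lambda>i. if i \<in> {1..k} then cyclic_succ k i else i"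
  have "inj_on ?t {1..k}" by (auto simp: inj_on_def split: if_splits)
  moreover have "?t ` {1..k} \<subseteq> {1..k}" by auto
  ultimately show "bij_betw ?t {1..k} {1..k}"
    using endo_inj_surj[of "{1..k}" ?t] by (simp add: bij_betw_def)
qed (simp del: atLeastAtMost_iff)

lemma orbit_subset_invariant:
  assumes "\<sigma> ` A \<subseteq> A" "a \<in> A"
  shows "orbit \<sigma> a \<subseteq> A"
proof
  fix u assume "u \<in> orbit \<sigma> a"
  then show "u \<in> A" by induct (use assms in auto)
qed

lemma invariant_diff_orbit:
  assumes "permutation \<sigma>" "\<sigma> ` A \<subseteq> A"
  shows "\<sigma> ` (A - orbit \<sigma> a) \<subseteq> A - orbit \<sigma> a"
proof (rule image_subsetI)
  fix u assume u: "u \<in> A - orbit \<sigma> a"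
  have "\<sigma> u \<notin> orbit \<sigma> a"
  proof
    assume "\<sigma> u \<in> orbit \<sigma> a"
    then have "orbit \<sigma> (\<sigma> u) = orbit \<sigma> a"
      by (intro orbit_cyclic_eq3 cyclic_on_orbit' assms(1))
    then have "u \<in> orbit \<sigma> a"
      using permutation_orbit_step[OF assms(1)] permutation_self_in_orbit[OF assms(1)] by metis
    with u show False by blast
  qed
  with u assms(2) show "\<sigma> u \<in> A - orbit \<sigma> a" by blast
qed

lemma orbit_enumeration:
  assumes perm: "permutation \<sigma>"
  obtains e and p :: nat where "orbit \<sigma> a = e ` {1..p}" "inj_on e {1..p}" "p \<ge> 1" "e 1 = a"
    "\<And>i. i \<in> {1..p} \<Longrightarrow> \<sigma> (e i) = e (cyclic_succ p i)"
proof
  define p where "p = funpow_dist1 \<sigma> a a"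
  define e where "e i = (\<sigma> ^^ (i - 1)) a" for i
  have self: "a \<in> orbit \<sigma> a" using permutation_self_in_orbit[OF perm] .
  have shift: "{1..p} = Suc ` {0..<p}" by (auto simp: image_iff)
  show "orbit \<sigma> a = e ` {1..p}"
    unfolding orbit_conv_funpow_dist1[OF self] p_def[symmetric] shift image_image e_def by simp
  show "inj_on e {1..p}"
    using inj_on_funpow_dist1[OF self, folded p_def] unfolding shift
    by (intro inj_on_imageI) (simp add: comp_def e_def)
  show "p \<ge> 1" "e 1 = a" by (simp_all add: p_def e_def)
  have "(\<sigma> ^^ p) a = a" unfolding p_def using funpow_dist1_prop[OF self] .
  then show "\<sigma> (e i) = e (cyclic_succ p i)" if "i \<in> {1..p}" for i
    using that by (cases i) (auto simp: e_def)
qed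

lemma rearrangement_gain_cycle:
  assumes "inj_on e {1..p}" "\<And>i. i \<in> {1..p} \<Longrightarrow> \<sigma> (e i) = e (cyclic_succ p i)"
  shows "rearrangement_gain c xs ys \<sigma> (e ` {1..p})
    = rearrangement_gain c (xs \<circ> e) (ys \<circ> e) (cyclic_succ p) {1..p}"
  unfolding rearrangement_gain_def sum.reindex[OF assms(1)] using assms(2) by (auto intro: sum.cong)

lemma c_cyclically_monotoneD:
  assumes "c_cyclically_monotone c \<Gamma>" "k \<ge> 1" "\<forall>i\<in>{1..k}. (xs i, ys i) \<in> \<Gamma>"
  shows "rearrangement_gain c xs ys (cyclic_succ k) {1..k} \<le> 0"
  using assms unfolding c_cyclically_monotone_def rearrangement_gain_eq_diff by simp

lemma rearrangement_gain_orbit_nonpos: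
  assumes cm: "c_cyclically_monotone c \<Gamma>" and perm: "permutation \<sigma>"
    and on_\<Gamma>: "\<forall>u\<in>orbit \<sigma> a. (xs u, ys u) \<in> \<Gamma>"
  shows "rearrangement_gain c xs ys \<sigma> (orbit \<sigma> a) \<le> 0"
proof -
  obtain e p where orb: "orbit \<sigma> a = e ` {1..p}" and cycle: "inj_on e {1..p}"
    "\<And>i. i \<in> {1..p} \<Longrightarrow> \<sigma> (e i) = e (cyclic_succ p i)" and "p \<ge> 1"
    using orbit_enumeration[OF perm] by metis
  have "rearrangement_gain c xs ys \<sigma> (orbit \<sigma> a)
      = rearrangement_gain c (xs \<circ> e) (ys \<circ> e) (cyclic_succ p) {1..p}"
    unfolding orb using cycle by (rule rearrangement_gain_cycle)
  also have "\<dots> \<le> 0"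
    using on_\<Gamma> \<open>p \<ge> 1\<close> unfolding orb by (intro c_cyclically_monotoneD[OF cm]) auto
  finally show ?thesis .
qed

lemma rearrangement_gain_invariant_nonpos:
  assumes cm: "c_cyclically_monotone c \<Gamma>" and perm: "permutation \<sigma>"
  shows "finite A \<Longrightarrow> \<sigma> ` A \<subseteq> A \<Longrightarrow> \<forall>u\<in>A. (xs u, ys u) \<in> \<Gamma> \<Longrightarrow>
    rearrangement_gain c xs ys \<sigma> A \<le> 0"
proof (induction "card A" arbitrary: A rule: less_induct)
  case less
  show ?case
  proof (cases "A = {}")
    case True
    then show ?thesis by (simp add: rearrangement_gain_def)
  next
    case False
    then obtain a where a: "a \<in> A" by blast
    let ?O = "orbit \<sigma> a"
    have sub: "?O \<subseteq> A" using orbit_subset_invariant[OF less.prems(2) a] .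
    have "card (A - ?O) < card A"
      using a less.prems(1) permutation_self_in_orbit[OF perm]
      by (intro psubset_card_mono) auto
    then have rest: "rearrangement_gain c xs ys \<sigma> (A - ?O) \<le> 0"
      using less invariant_diff_orbit[OF perm less.prems(2)] by simp
    have "rearrangement_gain c xs ys \<sigma> ?O \<le> 0"
      using sub less.prems(3) by (intro rearrangement_gain_orbit_nonpos[OF cm perm]) blast
    with rest show ?thesis
      unfolding rearrangement_gain_subset_diff[OF less.prems(1) sub] by simp
  qed
qed

lemma rearrangement_gain_le_orbit:
  assumes cm: "c_cyclically_monotone c \<Gamma>" and perm: "permutation \<sigma>"
    and A: "finite A" "\<sigma> ` A \<subseteq> A" "a \<in> A"
    and on_\<Gamma>: "\<forall>u\<in>A - orbit \<sigma> a. (xs u, ys u) \<in> \<Gamma>"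
  shows "rearrangement_gain c xs ys \<sigma> A \<le> rearrangement_gain c xs ys \<sigma> (orbit \<sigma> a)"
proof -
  have "rearrangement_gain c xs ys \<sigma> (A - orbit \<sigma> a) \<le> 0"
    using A(1) invariant_diff_orbit[OF perm A(2)] on_\<Gamma>
    by (intro rearrangement_gain_invariant_nonpos[OF cm perm]) auto
  then show ?thesis
    using rearrangement_gain_subset_diff[OF A(1) orbit_subset_invariant[OF A(2,3)], of c xs ys] by simp
qed

lemma I_fun_upper:
  fixes k :: nat
  assumes "k \<ge> 2" "\<forall>i\<in>{2..k}. (xs i, ys i) \<in> \<Gamma>" "\<sigma> permutes {1..k}"
  shows "ereal (rearrangement_gain c xs ys \<sigma> {1..k}) \<le> I_fun c \<Gamma> (xs 1, ys 1)"
  unfolding I_fun_def rearrangement_gain_eq_diff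
  by (rule SUP_upper2[where i = "(k, xs, ys, \<sigma>)"]) (use assms in auto)

lemma I_fun_least:
  assumes "\<And>(k :: nat) xs ys \<sigma>. k \<ge> 2 \<Longrightarrow> (xs 1, ys 1) = p \<Longrightarrow> \<forall>i\<in>{2..k}. (xs i, ys i) \<in> \<Gamma> \<Longrightarrow>
    \<sigma> permutes {1..k} \<Longrightarrow> ereal (rearrangement_gain c xs ys \<sigma> {1..k}) \<le> b"
  shows "I_fun c \<Gamma> p \<le> b"
  unfolding I_fun_def by (rule SUP_least) (use assms in \<open>auto simp: rearrangement_gain_eq_diff\<close>)

lemma J_fun_upper:
  fixes k :: nat
  assumes "k \<ge> 2" "\<forall>i\<in>{2..k}. (xs i, ys i) \<in> \<Gamma>"
  shows "ereal (rearrangement_gain c xs ys (cyclic_succ k) {1..k}) \<le> J_fun c \<Gamma> (xs 1, ys 1)"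
  unfolding J_fun_def rearrangement_gain_eq_diff
  by (rule SUP_upper2[where i = "(k, xs, ys)"]) (use assms in auto)

lemma J_fun_least:
  assumes "\<And>(k :: nat) xs ys. k \<ge> 2 \<Longrightarrow> (xs 1, ys 1) = p \<Longrightarrow> \<forall>i\<in>{2..k}. (xs i, ys i) \<in> \<Gamma> \<Longrightarrow>
    ereal (rearrangement_gain c xs ys (cyclic_succ k) {1..k}) \<le> b"
  shows "J_fun c \<Gamma> p \<le> b"
  unfolding J_fun_def by (rule SUP_least) (use assms in \<open>auto simp: rearrangement_gain_eq_diff\<close>)

lemma I_fun_nonneg:
  assumes "\<Gamma> \<noteq> {}"
  shows "0 \<le> I_fun c \<Gamma> p"
proof -
  obtain g where "g \<in> \<Gamma>" using assms by blast
  then have "ereal (rearrangement_gain c ((\<lambda>_. fst g)(1 := fst p)) ((\<lambda>_. snd g)(1 := snd p)) id {1..2})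
      \<le> I_fun c \<Gamma> (fst p, snd p)"
    using I_fun_upper[of 2 "(\<lambda>_. fst g)(1 := fst p)" "(\<lambda>_. snd g)(1 := snd p)" \<Gamma> id c] by simp
  then show ?thesis by (simp add: zero_ereal_def)
qed

lemma I_fun_nonpos:
  assumes cm: "c_cyclically_monotone c \<Gamma>" and "p \<in> \<Gamma>"
  shows "I_fun c \<Gamma> p \<le> 0"
proof (rule I_fun_least)
  fix k :: nat and xs ys \<sigma>
  assume k: "k \<ge> 2" and "(xs 1, ys 1) = p" "\<forall>i\<in>{2..k}. (xs i, ys i) \<in> \<Gamma>"
    and \<sigma>: "\<sigma> permutes {1..k}"
  moreover have "{1..k} = insert 1 {2..k}" using k by auto
  ultimately have "\<forall>u\<in>{1..k}. (xs u, ys u) \<in> \<Gamma>"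
    using \<open>p \<in> \<Gamma>\<close> by simp
  then have "rearrangement_gain c xs ys \<sigma> {1..k} \<le> 0"
    using \<sigma> by (intro rearrangement_gain_invariant_nonpos[OF cm])
      (auto simp: permutation_permutes permutes_image)
  then show "ereal (rearrangement_gain c xs ys \<sigma> {1..k}) \<le> 0" by (simp add: zero_ereal_def)
qed

lemma J_fun_le_I_fun: "J_fun c \<Gamma> p \<le> I_fun c \<Gamma> p"
proof (rule J_fun_least)
  fix k :: nat and xs ys
  assume k: "k \<ge> 2" and p: "(xs 1, ys 1) = p" and on_\<Gamma>: "\<forall>i\<in>{2..k}. (xs i, ys i) \<in> \<Gamma>"
  let ?shift = "\<lambda>i. if i \<in> {1..k} then cyclic_succ k i else i"
  have "rearrangement_gain c xs ys (cyclic_succ k) {1..k} = rearrangement_gain c xs ys ?shift {1..k}"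
    unfolding rearrangement_gain_def by (rule sum.cong) auto
  also have "ereal \<dots> \<le> I_fun c \<Gamma> p"
    using I_fun_upper[OF k on_\<Gamma> cyclic_shift_permutes] p by simp
  finally show "ereal (rearrangement_gain c xs ys (cyclic_succ k) {1..k}) \<le> I_fun c \<Gamma> p" .
qed

lemma J_fun_nonneg:
  assumes "x \<in> fst ` \<Gamma> \<or> y \<in> snd ` \<Gamma>"
  shows "0 \<le> J_fun c \<Gamma> (x, y)"
proof -
  obtain x' y' where "(x', y') \<in> \<Gamma>" and "x' = x \<or> y' = y" using assms by force
  then have "ereal (rearrangement_gain c ((\<lambda>_. x')(1 := x)) ((\<lambda>_. y')(1 := y)) (cyclic_succ 2) {1..2})
      \<le> J_fun c \<Gamma> (x, y)"
    using J_fun_upper[of 2 "(\<lambda>_. x')(1 := x)" "(\<lambda>_. y')(1 := y)" \<Gamma> c] by simp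
  moreover have "rearrangement_gain c ((\<lambda>_. x')(1 := x)) ((\<lambda>_. y')(1 := y)) (cyclic_succ 2) {1..2} = 0"
    using \<open>x' = x \<or> y' = y\<close> by (auto simp: rearrangement_gain_def numeral_2_eq_2)
  ultimately show ?thesis by (simp add: zero_ereal_def)
qed

lemma I_fun_le_J_fun:
  assumes cm: "c_cyclically_monotone c \<Gamma>" and xy: "x \<in> fst ` \<Gamma> \<or> y \<in> snd ` \<Gamma>"
  shows "I_fun c \<Gamma> (x, y) \<le> J_fun c \<Gamma> (x, y)"
proof (rule I_fun_least)
  fix k :: nat and xs ys \<sigma>
  assume k: "k \<ge> 2" and start: "(xs 1, ys 1) = (x, y)"
    and on_\<Gamma>: "\<forall>i\<in>{2..k}. (xs i, ys i) \<in> \<Gamma>" and \<sigma>: "\<sigma> permutes {1..k}"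
  have perm: "permutation \<sigma>" using \<sigma> by (auto simp: permutation_permutes)
  obtain e p where orb: "orbit \<sigma> 1 = e ` {1..p}" and cycle: "inj_on e {1..p}"
    "\<And>i. i \<in> {1..p} \<Longrightarrow> \<sigma> (e i) = e (cyclic_succ p i)" and "p \<ge> 1" "e 1 = 1"
    using orbit_enumeration[OF perm] by metis
  have sub: "orbit \<sigma> 1 \<subseteq> {1..k}" using permutes_orbit_subset[OF \<sigma>] k by simp
  have "1 \<in> orbit \<sigma> 1" using permutation_self_in_orbit[OF perm] .
  then have "{1..k} - orbit \<sigma> 1 \<subseteq> {1..k} - {1}" by blast
  also have "\<dots> = {2..k}" by auto
  finally have "\<forall>u\<in>{1..k} - orbit \<sigma> 1. (xs u, ys u) \<in> \<Gamma>" using on_\<Gamma> by blast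
  moreover have "\<sigma> ` {1..k} \<subseteq> {1..k}" using permutes_image[OF \<sigma>] by simp
  ultimately have "rearrangement_gain c xs ys \<sigma> {1..k} \<le> rearrangement_gain c xs ys \<sigma> (orbit \<sigma> 1)"
    using k by (intro rearrangement_gain_le_orbit[OF cm perm]) auto
  also have "\<dots> = rearrangement_gain c (xs \<circ> e) (ys \<circ> e) (cyclic_succ p) {1..p}"
    unfolding orb using cycle by (rule rearrangement_gain_cycle)
  also have "ereal \<dots> \<le> J_fun c \<Gamma> (x, y)"
  proof (cases "p = 1")
    case True
    then show ?thesis using J_fun_nonneg[OF xy] by (simp add: rearrangement_gain_def zero_ereal_def)
  next
    case False
    have "e i \<in> {2..k}" if "i \<in> {2..p}" for i
    proof -
      have "i \<in> {1..p}" using that by simp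
      then have "e i \<in> {1..k}" using sub unfolding orb by blast
      moreover have "e i \<noteq> e 1" using that inj_onD[OF cycle(1)] \<open>p \<ge> 1\<close> by fastforce
      ultimately show ?thesis using \<open>e 1 = 1\<close> by auto
    qed
    then show ?thesis
      using J_fun_upper[of p "xs \<circ> e" "ys \<circ> e" \<Gamma> c] False \<open>p \<ge> 1\<close> on_\<Gamma> start \<open>e 1 = 1\<close> by auto
  qed
  finally show "ereal (rearrangement_gain c xs ys \<sigma> {1..k}) \<le> J_fun c \<Gamma> (x, y)" by simp
qed

lemma lower_semicont_SUP:
  assumes "\<And>z. z \<in> T \<Longrightarrow> continuous_on UNIV (f z)"
  shows "lower_semicont (\<lambda>p. SUP z\<in>T. ereal (f z p))"
  unfolding lower_semicont_def
proof
  fix t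
  have "{p. t < (SUP z\<in>T. ereal (f z p))} = (\<Union>z\<in>T. {p. t < ereal (f z p)})"
    by (auto simp: less_SUP_iff)
  moreover have "open {p. t < ereal (f z p)}" if "z \<in> T" for z
    using assms[OF that] by (intro open_Collect_less continuous_on_const continuous_on_ereal)
  ultimately show "open {p. t < (SUP z\<in>T. ereal (f z p))}" by auto
qed

lemma continuous_on_rearrangement_gain_update:
  fixes c :: "'a::topological_space \<times> 'b::topological_space \<Rightarrow> real"
  assumes "continuous_on UNIV c"
  shows "continuous_on UNIV (\<lambda>p. rearrangement_gain c (xs(i := fst p)) (ys(i := snd p)) \<sigma> A)"
proof -
  have "continuous_on UNIV (\<lambda>p. c ((xs(i := fst p)) u, (ys(i := snd p)) v))" for u v
  proof -
    have "continuous_on UNIV (\<lambda>p. ((xs(i := fst p)) u, (ys(i := snd p)) v))"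
      by (cases "u = i"; cases "v = i") (auto intro!: continuous_intros)
    then show ?thesis using continuous_on_compose2[OF assms] by blast
  qed
  then show ?thesis unfolding rearrangement_gain_def by (intro continuous_intros)
qed

lemma I_fun_eq_SUP_update:
  "I_fun c \<Gamma> p = (SUP (k, xs, ys, \<sigma>) \<in> {(k :: nat, xs, ys, \<sigma>). k \<ge> 2 \<and>
      (\<forall>i\<in>{2..k}. (xs i, ys i) \<in> \<Gamma>) \<and> \<sigma> permutes {1..k}}.
    ereal (rearrangement_gain c (xs(1 := fst p)) (ys(1 := snd p)) \<sigma> {1..k}))"
    (is "?I = ?S")
proof (rule antisym)
  show "?I \<le> ?S"
  proof (rule I_fun_least)
    fix k :: nat and xs ys \<sigma>
    assume "k \<ge> 2" "(xs 1, ys 1) = p" "\<forall>i\<in>{2..k}. (xs i, ys i) \<in> \<Gamma>" "\<sigma> permutes {1..k}"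
    then show "ereal (rearrangement_gain c xs ys \<sigma> {1..k}) \<le> ?S"
      by (intro SUP_upper2[where i = "(k, xs, ys, \<sigma>)"]) auto
  qed
  show "?S \<le> ?I"
  proof (rule SUP_least, clarify)
    fix k :: nat and xs ys \<sigma>
    assume "k \<ge> 2" "\<forall>i\<in>{2..k}. (xs i, ys i) \<in> \<Gamma>" "\<sigma> permutes {1..k}"
    then show "ereal (rearrangement_gain c (xs(1 := fst p)) (ys(1 := snd p)) \<sigma> {1..k}) \<le> I_fun c \<Gamma> p"
      using I_fun_upper[of k "xs(1 := fst p)" "ys(1 := snd p)" \<Gamma> \<sigma> c] by simp
  qed
qed

lemma I_fun_lower_semicont:
  fixes c :: "'a::topological_space \<times> 'b::topological_space \<Rightarrow> real"
  assumes "continuous_on UNIV c"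
  shows "lower_semicont (I_fun c \<Gamma>)"
proof -
  have "lower_semicont (\<lambda>p. SUP z \<in> {(k :: nat, xs, ys, \<sigma>). k \<ge> 2 \<and>
      (\<forall>i\<in>{2..k}. (xs i, ys i) \<in> \<Gamma>) \<and> \<sigma> permutes {1..k}}.
    ereal (case z of (k, xs, ys, \<sigma>) \<Rightarrow> rearrangement_gain c (xs(1 := fst p)) (ys(1 := snd p)) \<sigma> {1..k}))"
    by (rule lower_semicont_SUP)
      (auto split: prod.split intro: continuous_on_rearrangement_gain_update[OF assms])
  then show ?thesis
    unfolding I_fun_eq_SUP_update[abs_def] by (simp add: case_prod_unfold)
qed

theorem lemma4p2:
  fixes c :: "'a::polish_space \<times> 'b::polish_space \<Rightarrow> real"
    and \<Gamma> :: "('a \<times> 'b) set"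
  assumes cont: "continuous_on UNIV c"
    and nonneg: "\<And>p. c p \<ge> 0"
    and ne: "\<Gamma> \<noteq> {}"
    and cm: "c_cyclically_monotone c \<Gamma>"
  shows "(\<forall>p. I_fun c \<Gamma> p \<ge> 0)
    \<and> lower_semicont (I_fun c \<Gamma>)
    \<and> (\<forall>p\<in>\<Gamma>. I_fun c \<Gamma> p = 0)
    \<and> (\<forall>p. I_fun c \<Gamma> p \<ge> J_fun c \<Gamma> p)
    \<and> (\<forall>x y. (x \<in> fst ` \<Gamma> \<or> y \<in> snd ` \<Gamma>) \<longrightarrow> I_fun c \<Gamma> (x, y) = J_fun c \<Gamma> (x, y))"
  using I_fun_nonneg[OF ne] I_fun_lower_semicont[OF cont] I_fun_nonpos[OF cm]
    J_fun_le_I_fun I_fun_le_J_fun[OF cm]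
  by (meson order.antisym)

end
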